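(* Let $M$ be an entrywise nonnegative $m\times n$ real matrix and let $M=AW$ be a stable nonnegative matrix factorization with $A\in\mathbb{R}_{\ge0}^{m\times r}$, $W\in\mathbb{R}_{\ge0}^{r\times n}$. Let $s=\mathrm{rank}(A)$, let $U\subseteq[m]$ be a set of $s$ linearly independent rows of $A$, and let $B_1,\dots,B_p$ be the ensemble of $A$ at $U$. Then for each column index $i$, $W_i$ is contained in the set $\{B_1M_i^U,\dots,B_pM_i^U\}$.
   Context: Notation: $M_i$ is the $i$-th column, $M^j$ the $j$-th row; $A_S$ denotes columns in $S$, $A^U$ rows in $U$, $M_i^U$ the entries of $M_i$ in rows $U$. $\mathrm{aff}(A)=\{\sum_i\alpha_iA_i:\alpha_i\ge0\}$. A subset $S\subseteq[r]$ of columns of $A$ is admissible for $v\in\mathbb{R}^m$ if $v\in\mathrm{aff}(A_S)$; a subset $T\subseteq[r]$ of rows of $W$ is admissible for a row vector $u$ if $u$ is a nonnegative combination of the rows of $W^T$. Lexicographic ordering on subsets of $[r]$: if $|S|<|T|$ then $S$ precedes $T$; equal-size subsets compared by standard lexicographic order. $M=AW$ is stable if, with $S_i$ the lexicographically first subset of columns of $A$ admissible for $M_i$ and $T_j$ the lexicographically first subset of rows of $W$ admissible for $M^j$, each $W_i$ is supported in $S_i$ and each row $A^j$ is supported in $T_j$. Ensemble: let $S_1,\dots,S_p$ be all sets of $s$ linearly independent columns of $A$, in lexicographic order; $B_k$ is the $r\times s$ matrix that is zero on rows outside $S_k$ and whose restriction to rows $S_k$ equals $(A^U_{S_k})^{-1}$.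 *)

theory Defs
  imports Complex_Main
begin

text \<open>Matrices are functions nat \<Rightarrow> nat \<Rightarrow> real with explicit dimensions:
  X j k is the entry in row j, column k.  Index sets are subsets of {..<d}.\<close>

definition nonneg_mat :: "(nat \<Rightarrow> nat \<Rightarrow> real) \<Rightarrow> nat \<Rightarrow> nat \<Rightarrow> bool" where
  "nonneg_mat X d1 d2 \<longleftrightarrow> (\<forall>j<d1. \<forall>k<d2. 0 \<le> X j k)"

definition is_product :: "(nat \<Rightarrow> nat \<Rightarrow> real) \<Rightarrow> (nat \<Rightarrow> nat \<Rightarrow> real) \<Rightarrow> (nat \<Rightarrow> nat \<Rightarrow> real)
    \<Rightarrow> nat \<Rightarrow> nat \<Rightarrow> nat \<Rightarrow> bool" where
  "is_product M A W m r n \<longleftrightarrow> (\<forall>j<m. \<forall>i<n. M j i = (\<Sum>k<r. A j k * W k i))"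

definition lin_indep_cols :: "(nat \<Rightarrow> nat \<Rightarrow> real) \<Rightarrow> nat \<Rightarrow> nat set \<Rightarrow> bool" where
  "lin_indep_cols A m S \<longleftrightarrow>
     (\<forall>c. (\<forall>j<m. (\<Sum>k\<in>S. c k * A j k) = 0) \<longrightarrow> (\<forall>k\<in>S. c k = 0))"

definition lin_indep_rows :: "(nat \<Rightarrow> nat \<Rightarrow> real) \<Rightarrow> nat \<Rightarrow> nat set \<Rightarrow> bool" where
  "lin_indep_rows A r U \<longleftrightarrow>
     (\<forall>c. (\<forall>k<r. (\<Sum>j\<in>U. c j * A j k) = 0) \<longrightarrow> (\<forall>j\<in>U. c j = 0))"

definition mat_rank :: "(nat \<Rightarrow> nat \<Rightarrow> real) \<Rightarrow> nat \<Rightarrow> nat \<Rightarrow> nat" where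
  "mat_rank A m r = Max {card S | S. S \<subseteq> {..<r} \<and> lin_indep_cols A m S}"

definition subset_lex_less :: "nat set \<Rightarrow> nat set \<Rightarrow> bool" where
  "subset_lex_less S T \<longleftrightarrow> card S < card T \<or>
     (card S = card T \<and>
      (sorted_list_of_set S, sorted_list_of_set T) \<in> lexord {(a, b). a < b})"

definition col_admissible :: "(nat \<Rightarrow> nat \<Rightarrow> real) \<Rightarrow> nat \<Rightarrow> (nat \<Rightarrow> real) \<Rightarrow> nat set \<Rightarrow> bool" where
  "col_admissible A m v S \<longleftrightarrow>
     (\<exists>\<alpha>. (\<forall>k\<in>S. 0 \<le> \<alpha> k) \<and> (\<forall>j<m. v j = (\<Sum>k\<in>S. \<alpha> k * A j k)))"

definition row_admissible :: "(nat \<Rightarrow> nat \<Rightarrow> real) \<Rightarrow> nat \<Rightarrow> (nat \<Rightarrow> real) \<Rightarrow> nat set \<Rightarrow> bool" where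
  "row_admissible W n u T \<longleftrightarrow>
     (\<exists>\<beta>. (\<forall>k\<in>T. 0 \<le> \<beta> k) \<and> (\<forall>i<n. u i = (\<Sum>k\<in>T. \<beta> k * W k i)))"

definition lexfirst_col_adm :: "(nat \<Rightarrow> nat \<Rightarrow> real) \<Rightarrow> nat \<Rightarrow> nat \<Rightarrow> (nat \<Rightarrow> real) \<Rightarrow> nat set \<Rightarrow> bool" where
  "lexfirst_col_adm A m r v S \<longleftrightarrow> S \<subseteq> {..<r} \<and> col_admissible A m v S \<and>
     (\<forall>T. T \<subseteq> {..<r} \<and> col_admissible A m v T \<longrightarrow> T = S \<or> subset_lex_less S T)"

definition lexfirst_row_adm :: "(nat \<Rightarrow> nat \<Rightarrow> real) \<Rightarrow> nat \<Rightarrow> nat \<Rightarrow> (nat \<Rightarrow> real) \<Rightarrow> nat set \<Rightarrow> bool" where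
  "lexfirst_row_adm W n r u T \<longleftrightarrow> T \<subseteq> {..<r} \<and> row_admissible W n u T \<and>
     (\<forall>T'. T' \<subseteq> {..<r} \<and> row_admissible W n u T' \<longrightarrow> T' = T \<or> subset_lex_less T T')"

definition stable_fact :: "(nat \<Rightarrow> nat \<Rightarrow> real) \<Rightarrow> (nat \<Rightarrow> nat \<Rightarrow> real) \<Rightarrow> (nat \<Rightarrow> nat \<Rightarrow> real)
    \<Rightarrow> nat \<Rightarrow> nat \<Rightarrow> nat \<Rightarrow> bool" where
  "stable_fact M A W m r n \<longleftrightarrow>
     (\<forall>i<n. \<forall>S. lexfirst_col_adm A m r (\<lambda>j. M j i) S \<longrightarrow> (\<forall>k<r. k \<notin> S \<longrightarrow> W k i = 0)) \<and>
     (\<forall>j<m. \<forall>T. lexfirst_row_adm W n r (\<lambda>i. M j i) T \<longrightarrow> (\<forall>k<r. k \<notin> T \<longrightarrow> A j k = 0))"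

definition sub_inv :: "(nat \<Rightarrow> nat \<Rightarrow> real) \<Rightarrow> nat set \<Rightarrow> nat set \<Rightarrow> nat \<Rightarrow> nat \<Rightarrow> real" where
  "sub_inv A U S = (THE C. (\<forall>a b. a \<notin> S \<or> b \<notin> U \<longrightarrow> C a b = 0) \<and>
      (\<forall>a\<in>S. \<forall>b\<in>S. (\<Sum>u\<in>U. C a u * A u b) = (if a = b then 1 else 0)) \<and>
      (\<forall>u\<in>U. \<forall>v\<in>U. (\<Sum>a\<in>S. A u a * C a v) = (if u = v then 1 else 0)))"

text \<open>The matrix B_S (r x s, columns indexed by U): zero on rows outside S, and equal to
  (A^U_S)^{-1} on rows S.\<close>
definition ens_mat :: "(nat \<Rightarrow> nat \<Rightarrow> real) \<Rightarrow> nat set \<Rightarrow> nat set \<Rightarrow> nat \<Rightarrow> nat \<Rightarrow> real" where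
  "ens_mat A U S = (\<lambda>k u. if k \<in> S \<and> u \<in> U then sub_inv A U S k u else 0)"

definition ensemble :: "(nat \<Rightarrow> nat \<Rightarrow> real) \<Rightarrow> nat \<Rightarrow> nat \<Rightarrow> nat set \<Rightarrow> (nat \<Rightarrow> nat \<Rightarrow> real) set" where
  "ensemble A m r U = {ens_mat A U S | S. S \<subseteq> {..<r} \<and> card S = mat_rank A m r \<and> lin_indep_cols A m S}"

end

(*
  Since M_i = A W_i with W_i \<ge> 0, the full column set [r] is admissible for M_i, so the
  lexicographically first admissible set S_i exists. It has minimum cardinality among admissible
  sets, hence its columns are linearly independent (Carath\'eodory), and by stability W_i is
  supported in S_i. Extend S_i to a set S of rank A independent columns. The rows U restricted
  to S are then s independent vectors in R^S, so the block A^U_S is invertible, and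
  B_S M_i^U = (A^U_S)^-1 A^U_S W_i^S = W_i.
*)
theory Submission
  imports Defs "HOL-Library.Function_Algebras" "HOL-Library.List_Lexorder"
begin

lemma sum_fun_apply: "sum g P j = (\<Sum>p\<in>P. g p j)"
  for g :: "'a \<Rightarrow> 'b \<Rightarrow> 'c::comm_monoid_add"
  by (induct P rule: infinite_finite_induct) (auto simp: plus_fun_def zero_fun_def)

interpretation fun_vec: vector_space "\<lambda>(c::real) (f::'b \<Rightarrow> real) j. c * f j"
  by unfold_locales (auto simp: plus_fun_def algebra_simps)

definition indep_family :: "('a \<Rightarrow> 'b \<Rightarrow> real) \<Rightarrow> 'a set \<Rightarrow> bool" where
  "indep_family x P \<longleftrightarrow> (\<forall>c. (\<forall>j. (\<Sum>p\<in>P. c p * x p j) = 0) \<longrightarrow> (\<forall>p\<in>P. c p = 0))"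

definition in_span_family :: "('b \<Rightarrow> real) \<Rightarrow> ('a \<Rightarrow> 'b \<Rightarrow> real) \<Rightarrow> 'a set \<Rightarrow> bool" where
  "in_span_family w x P \<longleftrightarrow> (\<exists>d. \<forall>j. w j = (\<Sum>p\<in>P. d p * x p j))"

lemma indep_family_inj_on:
  assumes "finite P" and "indep_family x P"
  shows "inj_on x P"
proof (rule inj_onI, rule ccontr)
  fix p q assume pq: "p \<in> P" "q \<in> P" "x p = x q" "p \<noteq> q"
  define c where "c a = (if a = p then 1 else if a = q then -1 else (0::real))" for a
  have "(\<Sum>a\<in>P. c a * x a j) = 0" for j
  proof -
    have "(\<Sum>a\<in>P. c a * x a j) = (\<Sum>a\<in>{p, q}. c a * x a j)"
      by (rule sum.mono_neutral_right) (use pq assms(1) in \<open>auto simp: c_def\<close>)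
    also have "\<dots> = 0" using pq by (simp add: c_def)
    finally show ?thesis .
  qed
  then have "c p = 0" using assms(2) pq(1) unfolding indep_family_def by blast
  then show False by (simp add: c_def)
qed

lemma fun_vec_independent_image:
  assumes "finite P" and "indep_family x P"
  shows "fun_vec.independent (x ` P)"
proof (rule fun_vec.independent_if_scalars_zero)
  show "finite (x ` P)" using assms(1) by simp
  fix f v assume zero: "(\<Sum>v\<in>x ` P. (\<lambda>j. f v * v j)) = 0" and v: "v \<in> x ` P"
  have "(\<Sum>p\<in>P. f (x p) * x p j) = 0" for j
    using fun_cong[OF zero, of j] indep_family_inj_on[OF assms]
    by (simp add: sum_fun_apply sum.reindex zero_fun_def)
  then have "\<forall>p\<in>P. f (x p) = 0"
    using spec[OF assms(2)[unfolded indep_family_def], of "\<lambda>p. f (x p)"] by blast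
  with v show "f v = 0" by blast
qed

lemma in_span_family_imp_fun_vec_span:
  "in_span_family w y Q \<Longrightarrow> w \<in> fun_vec.span (y ` Q)"
proof -
  assume "in_span_family w y Q"
  then obtain d where d: "\<forall>j. w j = (\<Sum>q\<in>Q. d q * y q j)" by (auto simp: in_span_family_def)
  then have "w = (\<Sum>q\<in>Q. (\<lambda>j. d q * y q j))" by (auto simp: sum_fun_apply)
  also have "\<dots> \<in> fun_vec.span (y ` Q)"
    by (intro fun_vec.span_sum fun_vec.span_scale fun_vec.span_base) auto
  finally show ?thesis .
qed

lemma indep_family_card_le:
  assumes "finite P" and "finite Q" and "indep_family x P"
    and "\<And>p. p \<in> P \<Longrightarrow> in_span_family (x p) y Q"
  shows "card P \<le> card Q"
proof -
  have "x ` P \<subseteq> fun_vec.span (y ` Q)"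
    using assms(4) in_span_family_imp_fun_vec_span by blast
  from fun_vec.independent_span_bound[OF _ fun_vec_independent_image[OF assms(1,3)] this]
  have "card (x ` P) \<le> card (y ` Q)" using assms(2) by blast
  then show ?thesis
    using card_image[OF indep_family_inj_on[OF assms(1,3)]] card_image_le[OF assms(2), of y] by linarith
qed

lemma indep_family_insert:
  assumes "finite P" and "p0 \<notin> P" and "indep_family x P" and "\<not> in_span_family w x P"
  shows "indep_family (x(p0 := w)) (insert p0 P)"
  unfolding indep_family_def
proof (intro allI impI)
  fix c assume zero: "\<forall>j. (\<Sum>p\<in>insert p0 P. c p * (x(p0 := w)) p j) = 0"
  have comb: "c p0 * w j + (\<Sum>p\<in>P. c p * x p j) = 0" for j
  proof -
    have "(\<Sum>p\<in>P. c p * (x(p0 := w)) p j) = (\<Sum>p\<in>P. c p * x p j)"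
      by (rule sum.cong) (use assms(2) in auto)
    with zero[rule_format, of j] show ?thesis using assms(1,2) by simp
  qed
  have "c p0 = 0"
  proof (rule ccontr)
    assume "c p0 \<noteq> 0"
    have "w j = (\<Sum>p\<in>P. (- c p / c p0) * x p j)" for j
    proof -
      have "(\<Sum>p\<in>P. (- c p / c p0) * x p j) = - (\<Sum>p\<in>P. c p * x p j) / c p0"
        by (simp add: sum_divide_distrib sum_negf)
      also have "\<dots> = w j" using comb[of j] \<open>c p0 \<noteq> 0\<close> by (simp add: field_simps)
      finally show ?thesis by simp
    qed
    then have "in_span_family w x P"
      unfolding in_span_family_def by (rule exI[of _ "\<lambda>p. - c p / c p0", OF allI])
    with assms(4) show False by contradiction
  qed
  moreover have "\<forall>p\<in>P. c p = 0"
    using assms(3) comb \<open>c p0 = 0\<close> by (simp add: indep_family_def)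
  ultimately show "\<forall>p\<in>insert p0 P. c p = 0" by simp
qed

definition col_vec :: "(nat \<Rightarrow> nat \<Rightarrow> real) \<Rightarrow> nat \<Rightarrow> nat \<Rightarrow> nat \<Rightarrow> real" where
  "col_vec A m k = (\<lambda>j. if j < m then A j k else 0)"

lemma sum_col_vec:
  "(\<Sum>k\<in>S. c k * col_vec A m k j) = (if j < m then (\<Sum>k\<in>S. c k * A j k) else 0)"
  by (simp add: col_vec_def)

lemma lin_indep_cols_iff_indep_family:
  "lin_indep_cols A m S \<longleftrightarrow> indep_family (col_vec A m) S"
  unfolding lin_indep_cols_def indep_family_def sum_col_vec by (metis (no_types, lifting))

lemma in_span_family_col_vec_iff:
  "in_span_family (col_vec A m k) (col_vec A m) S \<longleftrightarrow>
     (\<exists>D. \<forall>j<m. A j k = (\<Sum>k'\<in>S. D k' * A j k'))"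
  unfolding in_span_family_def sum_col_vec by (auto simp: col_vec_def)

lemma finite_card_lin_indep_cols: "finite {card S |S. S \<subseteq> {..<r} \<and> lin_indep_cols A m S}"
  by (rule finite_subset[of _ "card ` Pow {..<r}"]) auto

lemma card_le_mat_rank:
  "S \<subseteq> {..<r} \<Longrightarrow> lin_indep_cols A m S \<Longrightarrow> card S \<le> mat_rank A m r"
  unfolding mat_rank_def by (rule Max_ge[OF finite_card_lin_indep_cols]) auto

lemma mat_rank_attained: "\<exists>S. S \<subseteq> {..<r} \<and> lin_indep_cols A m S \<and> card S = mat_rank A m r"
proof -
  have "lin_indep_cols A m {}" by (simp add: lin_indep_cols_def)
  then have "{card S |S. S \<subseteq> {..<r} \<and> lin_indep_cols A m S} \<noteq> {}" by blast
  from Max_in[OF finite_card_lin_indep_cols this] show ?thesis unfolding mat_rank_def by auto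
qed

lemma col_in_span_of_maximal_indep:
  assumes "S \<subseteq> {..<r}" and "lin_indep_cols A m S"
    and maximal: "\<And>k. k < r \<Longrightarrow> k \<notin> S \<Longrightarrow> \<not> lin_indep_cols A m (insert k S)"
    and "k < r"
  shows "\<exists>D. \<forall>j<m. A j k = (\<Sum>k'\<in>S. D k' * A j k')"
proof (cases "k \<in> S")
  case True
  with finite_subset[OF assms(1)] have "A j k = (\<Sum>k'\<in>S. (if k' = k then 1 else 0) * A j k')" for j
    by (simp add: if_distrib[of "\<lambda>x. x * _"] cong: if_cong)
  then show ?thesis by (intro exI[of _ "\<lambda>k'. if k' = k then 1 else 0"]) blast
next
  case False
  show ?thesis
  proof (rule ccontr)
    assume "\<not> ?thesis"
    then have "indep_family ((col_vec A m)(k := col_vec A m k)) (insert k S)"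
      using indep_family_insert[OF finite_subset[OF assms(1)] False, of "col_vec A m" "col_vec A m k"] assms(2)
      unfolding lin_indep_cols_iff_indep_family in_span_family_col_vec_iff by blast
    with maximal[OF assms(4) False] show False by (simp add: lin_indep_cols_iff_indep_family)
  qed
qed

lemma col_in_span_of_rank_indep:
  assumes "S \<subseteq> {..<r}" and "lin_indep_cols A m S" and "card S = mat_rank A m r"
    and "k < r"
  shows "\<exists>D. \<forall>j<m. A j k = (\<Sum>k'\<in>S. D k' * A j k')"
proof (rule col_in_span_of_maximal_indep[OF assms(1,2) _ assms(4)])
  fix k assume "k < r" "k \<notin> S"
  have "finite S" using assms(1) finite_subset by blast
  with \<open>k \<notin> S\<close> assms(3) have "\<not> card (insert k S) \<le> mat_rank A m r" by simp
  with card_le_mat_rank[of "insert k S"] assms(1) \<open>k < r\<close>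
  show "\<not> lin_indep_cols A m (insert k S)" by auto
qed

lemma lin_indep_cols_extend_to_rank:
  assumes "T \<subseteq> {..<r}" and "lin_indep_cols A m T"
  shows "\<exists>S. T \<subseteq> S \<and> S \<subseteq> {..<r} \<and> lin_indep_cols A m S \<and> card S = mat_rank A m r"
proof -
  define F where "F = {S. T \<subseteq> S \<and> S \<subseteq> {..<r} \<and> lin_indep_cols A m S}"
  have "finite F" unfolding F_def by (rule finite_subset[of _ "Pow {..<r}"]) auto
  moreover have "T \<in> F" using assms by (simp add: F_def)
  ultimately have "Max (card ` F) \<in> card ` F" by (intro Max_in) auto
  then obtain S where "S \<in> F" and "card S = Max (card ` F)" by auto
  then have largest: "card S' \<le> card S" if "S' \<in> F" for S' using \<open>finite F\<close> that by simp
  from \<open>S \<in> F\<close> have S: "T \<subseteq> S" "S \<subseteq> {..<r}" "lin_indep_cols A m S" by (auto simp: F_def)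
  have "finite S" using S(2) finite_subset by blast
  have spans: "in_span_family (col_vec A m k) (col_vec A m) S" if "k < r" for k
    unfolding in_span_family_col_vec_iff
  proof (rule col_in_span_of_maximal_indep[OF S(2,3) _ that])
    fix k assume "k < r" "k \<notin> S"
    with largest[of "insert k S"] S \<open>finite S\<close> show "\<not> lin_indep_cols A m (insert k S)"
      by (auto simp: F_def)
  qed
  obtain S0 where S0: "S0 \<subseteq> {..<r}" "lin_indep_cols A m S0" "card S0 = mat_rank A m r"
    using mat_rank_attained by blast
  have "card S0 \<le> card S"
    using indep_family_card_le[of S0 S "col_vec A m" "col_vec A m"] S0 spans finite_subset[OF S0(1)]
      \<open>finite S\<close> by (auto simp: lin_indep_cols_iff_indep_family)
  with card_le_mat_rank[OF S(2,3)] S S0(3) show ?thesis by auto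
qed

lemma col_admissible_remove_dependent:
  assumes "finite S" and "col_admissible A m v S" and "\<not> lin_indep_cols A m S"
  shows "\<exists>k0\<in>S. col_admissible A m v (S - {k0})"
proof -
  obtain \<alpha> where \<alpha>_nonneg: "\<forall>k\<in>S. 0 \<le> \<alpha> k" and v: "\<forall>j<m. v j = (\<Sum>k\<in>S. \<alpha> k * A j k)"
    using assms(2) unfolding col_admissible_def by blast
  obtain c k1 where dep: "\<forall>j<m. (\<Sum>k\<in>S. c k * A j k) = 0" and "k1 \<in> S" "c k1 > 0"
  proof -
    obtain c k1 where dep: "\<forall>j<m. (\<Sum>k\<in>S. c k * A j k) = 0" and "k1 \<in> S" "c k1 \<noteq> 0"
      using assms(3) unfolding lin_indep_cols_def by blast
    show thesis
    proof (cases "c k1 > 0")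
      case True
      with dep \<open>k1 \<in> S\<close> show thesis by (rule that)
    next
      case False
      have "\<forall>j<m. (\<Sum>k\<in>S. - c k * A j k) = 0" using dep by (simp add: sum_negf)
      moreover note \<open>k1 \<in> S\<close>
      moreover have "- c k1 > 0" using False \<open>c k1 \<noteq> 0\<close> by simp
      ultimately show thesis by (rule that)
    qed
  qed
  define P where "P = {k\<in>S. c k > 0}"
  have "finite P" "k1 \<in> P" using assms(1) \<open>k1 \<in> S\<close> \<open>c k1 > 0\<close> by (auto simp: P_def)
  text \<open>Move along the dependency until the first coefficient hits zero.\<close>
  define t where "t = Min ((\<lambda>k. \<alpha> k / c k) ` P)"
  have "t \<in> (\<lambda>k. \<alpha> k / c k) ` P"
    unfolding t_def using \<open>finite P\<close> \<open>k1 \<in> P\<close> by (intro Min_in) auto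
  then obtain k0 where "k0 \<in> P" and t: "t = \<alpha> k0 / c k0" by blast
  have t_le: "t \<le> \<alpha> k / c k" if "k \<in> P" for k
    unfolding t_def using \<open>finite P\<close> that by simp
  have "k0 \<in> S" "c k0 > 0" using \<open>k0 \<in> P\<close> by (auto simp: P_def)
  then have "0 \<le> t" using t \<alpha>_nonneg by simp
  define \<beta> where "\<beta> k = \<alpha> k - t * c k" for k
  have \<beta>_nonneg: "0 \<le> \<beta> k" if "k \<in> S" for k
  proof (cases "c k > 0")
    case True
    with that t_le[of k] have "t * c k \<le> \<alpha> k" by (simp add: P_def pos_le_divide_eq)
    then show ?thesis by (simp add: \<beta>_def)
  next
    case False
    with \<open>0 \<le> t\<close> have "t * c k \<le> 0" by (simp add: mult_nonneg_nonpos)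
    moreover have "0 \<le> \<alpha> k" using \<alpha>_nonneg that by blast
    ultimately show ?thesis by (simp add: \<beta>_def)
  qed
  have "\<beta> k0 = 0" using \<open>c k0 > 0\<close> t by (simp add: \<beta>_def)
  have "v j = (\<Sum>k\<in>S - {k0}. \<beta> k * A j k)" if "j < m" for j
  proof -
    have "v j = (\<Sum>k\<in>S. \<alpha> k * A j k) - t * (\<Sum>k\<in>S. c k * A j k)"
      using v dep that by simp
    also have "\<dots> = (\<Sum>k\<in>S. \<beta> k * A j k)"
      by (simp add: \<beta>_def algebra_simps sum_subtractf sum_distrib_left)
    also have "\<dots> = (\<Sum>k\<in>S - {k0}. \<beta> k * A j k)"
      using assms(1) \<open>k0 \<in> S\<close> \<open>\<beta> k0 = 0\<close> by (simp add: sum.remove)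
    finally show ?thesis .
  qed
  with \<beta>_nonneg \<open>k0 \<in> S\<close> show ?thesis unfolding col_admissible_def by blast
qed

lemma lin_indep_cols_if_min_card_admissible:
  assumes "finite S" and "col_admissible A m v S"
    and min: "\<And>T. T \<subseteq> S \<Longrightarrow> col_admissible A m v T \<Longrightarrow> card S \<le> card T"
  shows "lin_indep_cols A m S"
proof (rule ccontr)
  assume "\<not> lin_indep_cols A m S"
  then obtain k0 where "k0 \<in> S" "col_admissible A m v (S - {k0})"
    using col_admissible_remove_dependent assms(1,2) by blast
  moreover have "card (S - {k0}) < card S" using card_Diff1_less[OF assms(1) \<open>k0 \<in> S\<close>] .
  ultimately show False using min[of "S - {k0}"] by auto
qed

lemma lexfirst_col_adm_exists:
  assumes "T0 \<subseteq> {..<r}" and "col_admissible A m v T0"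
  shows "\<exists>S. lexfirst_col_adm A m r v S"
proof -
  define Adm where "Adm = {T. T \<subseteq> {..<r} \<and> col_admissible A m v T}"
  have "finite Adm" unfolding Adm_def by (rule finite_subset[of _ "Pow {..<r}"]) auto
  have "T0 \<in> Adm" using assms by (simp add: Adm_def)
  have finite_Adm: "finite T" if "T \<in> Adm" for T using that finite_subset by (auto simp: Adm_def)
  define c0 where "c0 = Min (card ` Adm)"
  have c0_le: "c0 \<le> card T" if "T \<in> Adm" for T unfolding c0_def using \<open>finite Adm\<close> that by simp
  have "c0 \<in> card ` Adm" unfolding c0_def using \<open>finite Adm\<close> \<open>T0 \<in> Adm\<close> by (intro Min_in) auto
  define L where "L = sorted_list_of_set ` {T\<in>Adm. card T = c0}"
  have "finite L" unfolding L_def using \<open>finite Adm\<close> by simp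
  have "L \<noteq> {}" using \<open>c0 \<in> card ` Adm\<close> by (auto simp: L_def)
  obtain S where S: "S \<in> Adm" "card S = c0" and S_min: "Min L = sorted_list_of_set S"
    using Min_in[OF \<open>finite L\<close> \<open>L \<noteq> {}\<close>] by (auto simp: L_def)
  have "T = S \<or> subset_lex_less S T" if "T \<in> Adm" for T
  proof (cases "card T = c0")
    case False
    with c0_le[OF that] S show ?thesis by (simp add: subset_lex_less_def)
  next
    case True
    with that have "sorted_list_of_set T \<in> L" by (auto simp: L_def)
    then have "sorted_list_of_set S \<le> sorted_list_of_set T"
      using Min_le[OF \<open>finite L\<close>] S_min by metis
    moreover have "T \<noteq> S \<Longrightarrow> sorted_list_of_set S \<noteq> sorted_list_of_set T"
      using finite_Adm[OF that] finite_Adm[OF S(1)] by (metis set_sorted_list_of_set)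
    ultimately have "T \<noteq> S \<Longrightarrow> sorted_list_of_set S < sorted_list_of_set T" by simp
    then show ?thesis using True S by (auto simp: subset_lex_less_def list_less_def)
  qed
  with S(1) show ?thesis unfolding lexfirst_col_adm_def Adm_def by blast
qed

lemma lexfirst_col_adm_min_card:
  assumes "lexfirst_col_adm A m r v S" and "T \<subseteq> {..<r}" and "col_admissible A m v T"
  shows "card S \<le> card T"
proof -
  have "T = S \<or> subset_lex_less S T" using assms unfolding lexfirst_col_adm_def by blast
  then show ?thesis by (auto simp: subset_lex_less_def)
qed

lemma lin_indep_cols_if_lexfirst_col_adm:
  assumes "lexfirst_col_adm A m r v S"
  shows "lin_indep_cols A m S"
proof -
  have "S \<subseteq> {..<r}" and "col_admissible A m v S"
    using assms unfolding lexfirst_col_adm_def by blast+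
  show ?thesis
  proof (rule lin_indep_cols_if_min_card_admissible)
    show "finite S" using \<open>S \<subseteq> {..<r}\<close> finite_subset by blast
    show "col_admissible A m v S" by fact
    show "\<And>T. T \<subseteq> S \<Longrightarrow> col_admissible A m v T \<Longrightarrow> card S \<le> card T"
      using lexfirst_col_adm_min_card[OF assms] \<open>S \<subseteq> {..<r}\<close> by (meson order_trans)
  qed
qed

lemma indep_family_rows_restricted:
  assumes "U \<subseteq> {..<m}" and "lin_indep_rows A r U"
    and spans: "\<And>k. k < r \<Longrightarrow> \<exists>D. \<forall>j<m. A j k = (\<Sum>k'\<in>S. D k' * A j k')"
  shows "indep_family (\<lambda>u k. if k \<in> S then A u k else 0) U"
  unfolding indep_family_def
proof (intro allI impI)
  fix c assume zero: "\<forall>k. (\<Sum>u\<in>U. c u * (if k \<in> S then A u k else 0)) = 0"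
  have zero_on_S: "(\<Sum>u\<in>U. c u * A u k) = 0" if "k \<in> S" for k
    using zero[rule_format, of k] that by simp
  have "(\<Sum>u\<in>U. c u * A u k) = 0" if k: "k < r" for k
  proof -
    obtain D where D: "\<forall>j<m. A j k = (\<Sum>k'\<in>S. D k' * A j k')" using spans[OF k] by blast
    have "(\<Sum>u\<in>U. c u * A u k) = (\<Sum>u\<in>U. c u * (\<Sum>k'\<in>S. D k' * A u k'))"
      using D assms(1) by (intro sum.cong) auto
    also have "\<dots> = (\<Sum>k'\<in>S. D k' * (\<Sum>u\<in>U. c u * A u k'))"
      by (simp add: sum_distrib_left mult.left_commute sum.swap[of _ U])
    also have "\<dots> = 0" using zero_on_S by simp
    finally show ?thesis .
  qed
  with assms(2) show "\<forall>u\<in>U. c u = 0" unfolding lin_indep_rows_def by blast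
qed

text \<open>Otherwise adjoining the unit vector would give more independent vectors than the |S|
  unit vectors that span them.\<close>
lemma unit_vec_in_span_of_indep_supported:
  fixes \<rho> :: "nat \<Rightarrow> 'b \<Rightarrow> real"
  assumes "finite U" and "finite S" and "card S \<le> card U" and "indep_family \<rho> U"
    and supp: "\<And>u k. u \<in> U \<Longrightarrow> k \<notin> S \<Longrightarrow> \<rho> u k = 0" and "a \<in> S"
  shows "in_span_family (\<lambda>k. if k = a then 1 else 0) \<rho> U"
proof (rule ccontr)
  define e where "e b = (\<lambda>k. if k = b then 1 else (0::real))" for b :: 'b
  assume "\<not> in_span_family (\<lambda>k. if k = a then 1 else 0) \<rho> U"
  moreover obtain p0 where "p0 \<notin> U" using ex_new_if_finite[OF infinite_UNIV_nat assms(1)] by blast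
  ultimately have indep: "indep_family (\<rho>(p0 := e a)) (insert p0 U)"
    using indep_family_insert[OF assms(1) _ assms(4)] by (simp add: e_def)
  have "in_span_family ((\<rho>(p0 := e a)) p) e S" if "p \<in> insert p0 U" for p
  proof (cases "p = p0")
    case True
    with assms(2,6) show ?thesis unfolding in_span_family_def
      by (intro exI[of _ "e a"]) (simp add: e_def if_distrib[of "\<lambda>x. x * _"] cong: if_cong)
  next
    case False
    with that supp assms(2) show ?thesis unfolding in_span_family_def
      by (intro exI[of _ "\<rho> p"]) (auto simp: e_def if_distrib cong: if_cong)
  qed
  from indep_family_card_le[OF _ assms(2) indep this] assms(1,3) \<open>p0 \<notin> U\<close> show False by simp
qed

lemma sub_inv_eqI:
  assumes "finite S" and "finite U"
    and supp: "\<And>a b. a \<notin> S \<or> b \<notin> U \<Longrightarrow> C a b = 0"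
    and left: "\<And>a b. a \<in> S \<Longrightarrow> b \<in> S \<Longrightarrow> (\<Sum>u\<in>U. C a u * A u b) = (if a = b then 1 else 0)"
    and right: "\<And>u v. u \<in> U \<Longrightarrow> v \<in> U \<Longrightarrow> (\<Sum>a\<in>S. A u a * C a v) = (if u = v then 1 else 0)"
  shows "sub_inv A U S = C"
  unfolding sub_inv_def
proof (rule the_equality)
  show "(\<forall>a b. a \<notin> S \<or> b \<notin> U \<longrightarrow> C a b = 0) \<and>
      (\<forall>a\<in>S. \<forall>b\<in>S. (\<Sum>u\<in>U. C a u * A u b) = (if a = b then 1 else 0)) \<and>
      (\<forall>u\<in>U. \<forall>v\<in>U. (\<Sum>a\<in>S. A u a * C a v) = (if u = v then 1 else 0))"
    using supp left right by blast
next
  fix C' assume C': "(\<forall>a b. a \<notin> S \<or> b \<notin> U \<longrightarrow> C' a b = 0) \<and>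
      (\<forall>a\<in>S. \<forall>b\<in>S. (\<Sum>u\<in>U. C' a u * A u b) = (if a = b then 1 else 0)) \<and>
      (\<forall>u\<in>U. \<forall>v\<in>U. (\<Sum>a\<in>S. A u a * C' a v) = (if u = v then 1 else 0))"
  show "C' = C"
  proof (intro ext)
    fix a v
    show "C' a v = C a v"
    proof (cases "a \<in> S \<and> v \<in> U")
      case False
      with C' supp show ?thesis by auto
    next
      case True
      text \<open>A left inverse equals a right inverse: C' = C' (A C) = (C' A) C = C.\<close>
      have "C' a v = (\<Sum>u\<in>U. C' a u * (if u = v then 1 else 0))"
        using True assms(2) by (simp add: if_distrib cong: if_cong)
      also have "\<dots> = (\<Sum>u\<in>U. C' a u * (\<Sum>b\<in>S. A u b * C b v))"
        using True right by (intro sum.cong) auto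
      also have "\<dots> = (\<Sum>b\<in>S. (\<Sum>u\<in>U. C' a u * A u b) * C b v)"
        by (simp add: sum_distrib_left sum_distrib_right mult.assoc sum.swap[of _ U])
      also have "\<dots> = C a v"
        using True C' assms(1) by (simp add: if_distrib[of "\<lambda>x. x * _"] cong: if_cong)
      finally show ?thesis .
    qed
  qed
qed

lemma right_inverse_if_left_inverse_on_indep_rows:
  assumes "finite S" and "finite U" and indep: "indep_family (\<lambda>u k. if k \<in> S then A u k else 0) U"
    and left: "\<And>a b. a \<in> S \<Longrightarrow> b \<in> S \<Longrightarrow> (\<Sum>u\<in>U. C a u * A u b) = (if a = b then 1 else 0)"
    and "w \<in> U" and "v \<in> U"
  shows "(\<Sum>a\<in>S. A w a * C a v) = (if w = v then 1 else 0)"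
proof -
  define c where "c u = (\<Sum>a\<in>S. A w a * C a u) - (if w = u then 1 else 0)" for u
  have "(\<Sum>u\<in>U. c u * (if k \<in> S then A u k else 0)) = 0" for k
  proof (cases "k \<in> S")
    case True
    have "(\<Sum>u\<in>U. (\<Sum>a\<in>S. A w a * C a u) * A u k) = (\<Sum>a\<in>S. A w a * (\<Sum>u\<in>U. C a u * A u k))"
      by (simp add: sum_distrib_left sum_distrib_right mult.assoc sum.swap[of _ U])
    also have "\<dots> = (\<Sum>a\<in>S. A w a * (if a = k then 1 else 0))"
      using left True by (intro sum.cong) auto
    also have "\<dots> = A w k" using True assms(1) by (simp add: if_distrib cong: if_cong)
    finally show ?thesis using True \<open>w \<in> U\<close> assms(2)
      by (simp add: c_def left_diff_distrib sum_subtractf if_distrib[of "\<lambda>x. x * _"] cong: if_cong)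
  qed simp
  with indep \<open>v \<in> U\<close> have "c v = 0" unfolding indep_family_def by blast
  then show ?thesis by (simp add: c_def)
qed

text \<open>The block A^U_S is invertible, so the description in sub_inv determines a unique matrix.\<close>
lemma sub_inv_left_inverse:
  assumes S: "S \<subseteq> {..<r}" "lin_indep_cols A m S" "card S = mat_rank A m r"
    and U: "U \<subseteq> {..<m}" "card U = mat_rank A m r" "lin_indep_rows A r U"
    and "a \<in> S" and "b \<in> S"
  shows "(\<Sum>u\<in>U. sub_inv A U S a u * A u b) = (if a = b then 1 else 0)"
proof -
  have "finite S" "finite U" using S(1) U(1) finite_subset by blast+
  define \<rho> where "\<rho> = (\<lambda>u k. if k \<in> S then A u k else (0::real))"
  have indep: "indep_family \<rho> U"
    unfolding \<rho>_def using indep_family_rows_restricted[OF U(1,3)] col_in_span_of_rank_indep[OF S] .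
  have "\<forall>a\<in>S. \<exists>d. \<forall>k. (if k = a then 1 else 0) = (\<Sum>u\<in>U. d u * \<rho> u k)"
    using unit_vec_in_span_of_indep_supported[OF \<open>finite U\<close> \<open>finite S\<close> _ indep] S(3) U(2)
    by (auto simp: \<rho>_def in_span_family_def)
  then obtain D where D: "\<And>a k. a \<in> S \<Longrightarrow> (if k = a then 1 else 0) = (\<Sum>u\<in>U. D a u * \<rho> u k)"
    by metis
  define C where "C a u = (if a \<in> S \<and> u \<in> U then D a u else 0)" for a u
  have left: "(\<Sum>u\<in>U. C a u * A u b) = (if a = b then 1 else 0)" if "a \<in> S" "b \<in> S" for a b
    using D[of a b] that by (simp add: C_def \<rho>_def eq_commute[of b a])
  have "sub_inv A U S = C"
  proof (rule sub_inv_eqI[OF \<open>finite S\<close> \<open>finite U\<close>])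
    show "\<And>u v. u \<in> U \<Longrightarrow> v \<in> U \<Longrightarrow> (\<Sum>a\<in>S. A u a * C a v) = (if u = v then 1 else 0)"
      using right_inverse_if_left_inverse_on_indep_rows[OF \<open>finite S\<close> \<open>finite U\<close> _ left]
        indep by (simp add: \<rho>_def)
  qed (use left in \<open>auto simp: C_def\<close>)
  with left assms(7,8) show ?thesis by simp
qed

lemma ens_mat_recovers_supported_vector:
  assumes left: "\<And>a b. a \<in> S \<Longrightarrow> b \<in> S \<Longrightarrow> (\<Sum>u\<in>U. sub_inv A U S a u * A u b) = (if a = b then 1 else 0)"
    and supp: "\<And>k. k < r \<Longrightarrow> k \<notin> S \<Longrightarrow> w k = 0"
    and v: "\<And>u. u \<in> U \<Longrightarrow> v u = (\<Sum>k<r. A u k * w k)"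
    and "k < r"
  shows "(\<Sum>u\<in>U. ens_mat A U S k u * v u) = w k"
proof (cases "k \<in> S")
  case True
  have "(\<Sum>u\<in>U. ens_mat A U S k u * v u) = (\<Sum>u\<in>U. sub_inv A U S k u * (\<Sum>k'<r. A u k' * w k'))"
    using True v by (simp add: ens_mat_def)
  also have "\<dots> = (\<Sum>k'<r. (\<Sum>u\<in>U. sub_inv A U S k u * A u k') * w k')"
    by (simp add: sum_distrib_left sum_distrib_right mult.assoc sum.swap[of _ U])
  also have "\<dots> = (\<Sum>k'<r. (if k = k' then 1 else 0) * w k')"
  proof (intro sum.cong refl)
    fix k' assume "k' \<in> {..<r}"
    then show "(\<Sum>u\<in>U. sub_inv A U S k u * A u k') * w k' = (if k = k' then 1 else 0) * w k'"
      using True left[of k k'] supp[of k'] by (cases "k' \<in> S") auto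
  qed
  also have "\<dots> = w k" using \<open>k < r\<close> by (simp add: if_distrib[of "\<lambda>x. x * _"] cong: if_cong)
  finally show ?thesis .
qed (use supp \<open>k < r\<close> in \<open>simp add: ens_mat_def\<close>)

theorem mainTheorem5:
  fixes M A W :: "nat \<Rightarrow> nat \<Rightarrow> real" and m n r s :: nat and U :: "nat set"
  assumes "nonneg_mat M m n"
    and "nonneg_mat A m r"
    and "nonneg_mat W r n"
    and "is_product M A W m r n"
    and "stable_fact M A W m r n"
    and "s = mat_rank A m r"
    and "U \<subseteq> {..<m}" and "card U = s" and "lin_indep_rows A r U"
  shows "\<forall>i<n. \<exists>B\<in>ensemble A m r U. \<forall>k<r. W k i = (\<Sum>u\<in>U. B k u * M u i)"
proof (intro allI impI)
  fix i assume "i < n"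
  have "col_admissible A m (\<lambda>j. M j i) {..<r}"
    using assms(3,4) \<open>i < n\<close> unfolding col_admissible_def nonneg_mat_def is_product_def
    by (intro exI[of _ "\<lambda>k. W k i"]) (auto simp: mult.commute)
  then obtain Si where Si: "lexfirst_col_adm A m r (\<lambda>j. M j i) Si"
    using lexfirst_col_adm_exists by blast
  then have "Si \<subseteq> {..<r}" unfolding lexfirst_col_adm_def by blast
  have supp: "\<And>k. k < r \<Longrightarrow> k \<notin> Si \<Longrightarrow> W k i = 0"
    using assms(5) Si \<open>i < n\<close> unfolding stable_fact_def by blast
  obtain S where S: "Si \<subseteq> S" "S \<subseteq> {..<r}" "lin_indep_cols A m S" "card S = mat_rank A m r"
    using lin_indep_cols_extend_to_rank[OF \<open>Si \<subseteq> {..<r}\<close> lin_indep_cols_if_lexfirst_col_adm[OF Si]]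
    by meson
  have "card U = mat_rank A m r" using assms(6,8) by simp
  have M_col: "M u i = (\<Sum>k<r. A u k * W k i)" if "u \<in> U" for u
    using assms(4,7) \<open>i < n\<close> that unfolding is_product_def by blast
  have "W k i = (\<Sum>u\<in>U. ens_mat A U S k u * M u i)" if "k < r" for k
  proof (rule ens_mat_recovers_supported_vector[where w = "\<lambda>k. W k i" and v = "\<lambda>u. M u i",
        symmetric, OF _ _ M_col that])
    show "\<And>a b. a \<in> S \<Longrightarrow> b \<in> S \<Longrightarrow> (\<Sum>u\<in>U. sub_inv A U S a u * A u b) = (if a = b then 1 else 0)"
      using sub_inv_left_inverse[OF S(2-4) assms(7) \<open>card U = mat_rank A m r\<close> assms(9)] .
    show "\<And>k. k < r \<Longrightarrow> k \<notin> S \<Longrightarrow> W k i = 0" using supp S(1) by blast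
  qed
  moreover have "ens_mat A U S \<in> ensemble A m r U" unfolding ensemble_def using S(2-4) by blast
  ultimately show "\<exists>B\<in>ensemble A m r U. \<forall>k<r. W k i = (\<Sum>u\<in>U. B k u * M u i)" by blast
qed

end
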